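(* If the curvature $k$ vanishes at only finitely many points of $[0,1]$, then $\mathcal G=L^2(\omega)$.
   Context: Let $\gamma:[0,1]\to\mathbb{R}^3$, $\gamma(s)=(0,\gamma_2(s),\gamma_3(s))$, be a simple planar curve of class $C^6$ parametrized by arclength; $\tau:=\dot\gamma$, $n:=(0,-\tau_3,\tau_2)$, $k:=\dot\tau\cdot n$ is the curvature. Let $\omega=(0,L)\times(0,1)$ with coordinates $(x_1,s)$. Define $\mathcal G$ as the set of $g\in L^2(\omega)$ for which there exists a family $(v^\epsilon)_{\epsilon>0}\subset C^5(\overline\omega;\mathbb{R}^3)$ with $\partial_sv^\epsilon_1+\partial_1v^\epsilon\cdot\tau=0$ and $\partial_sv^\epsilon\cdot\tau=0$ in $\omega$ for every $\epsilon$, and $\partial_1v_1^\epsilon\to g$ strongly in $L^2(\omega)$ as $\epsilon\to0$. *)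

theory Defs
  imports "HOL-Analysis.Analysis"
begin

fun Ck_interval :: "nat \<Rightarrow> (real \<Rightarrow> 'a::real_normed_vector) \<Rightarrow> bool" where
  "Ck_interval 0 f = continuous_on {0..1} f"
| "Ck_interval (Suc k) f =
     (continuous_on {0..1} f \<and>
      (\<forall>t\<in>{0..1}. f differentiable (at t within {0..1})) \<and>
      Ck_interval k (\<lambda>t. vector_derivative f (at t within {0..1})))"

definition omega_cl :: "real \<Rightarrow> (real \<times> real) set" where
  "omega_cl L = {0..L} \<times> {0..1}"

definition omega :: "real \<Rightarrow> (real \<times> real) set" where
  "omega L = {0<..<L} \<times> {0<..<1}"

text \<open>Partial derivatives with respect to x1 and s (taken relative to the closed rectangle;
at points of omega these are the ordinary partial derivatives).\<close>
definition pd1 :: "real \<Rightarrow> (real \<times> real \<Rightarrow> 'a::real_normed_vector) \<Rightarrow> real \<times> real \<Rightarrow> 'a" where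
  "pd1 L f p = vector_derivative (\<lambda>t. f (t, snd p)) (at (fst p) within {0..L})"

definition pd2 :: "real \<Rightarrow> (real \<times> real \<Rightarrow> 'a::real_normed_vector) \<Rightarrow> real \<times> real \<Rightarrow> 'a" where
  "pd2 L f p = vector_derivative (\<lambda>s. f (fst p, s)) (at (snd p) within {0..1})"

fun Ck_rect :: "real \<Rightarrow> nat \<Rightarrow> (real \<times> real \<Rightarrow> 'a::real_normed_vector) \<Rightarrow> bool" where
  "Ck_rect L 0 f = continuous_on (omega_cl L) f"
| "Ck_rect L (Suc k) f =
     (continuous_on (omega_cl L) f \<and>
      (\<forall>p\<in>omega_cl L. (\<lambda>t. f (t, snd p)) differentiable (at (fst p) within {0..L})
                     \<and> (\<lambda>s. f (fst p, s)) differentiable (at (snd p) within {0..1})) \<and>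
      Ck_rect L k (pd1 L f) \<and> Ck_rect L k (pd2 L f))"

definition tang :: "(real \<Rightarrow> real^3) \<Rightarrow> real \<Rightarrow> real^3" where
  "tang \<gamma> s = vector_derivative \<gamma> (at s within {0..1})"

definition nrm :: "(real \<Rightarrow> real^3) \<Rightarrow> real \<Rightarrow> real^3" where
  "nrm \<gamma> s = vector [0, - (tang \<gamma> s $ 3), tang \<gamma> s $ 2]"

definition curv :: "(real \<Rightarrow> real^3) \<Rightarrow> real \<Rightarrow> real" where
  "curv \<gamma> s = vector_derivative (tang \<gamma>) (at s within {0..1}) \<bullet> nrm \<gamma> s"

definition L2 :: "real \<Rightarrow> (real \<times> real \<Rightarrow> real) set" where
  "L2 L = {g. g \<in> borel_measurable (lebesgue_on (omega L)) \<and>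
              (\<integral>\<^sup>+ p. ennreal ((g p)\<^sup>2) \<partial>lebesgue_on (omega L)) < \<infinity>}"

definition calG :: "real \<Rightarrow> (real \<Rightarrow> real^3) \<Rightarrow> (real \<times> real \<Rightarrow> real) set" where
  "calG L \<gamma> = {g \<in> L2 L. \<exists>v :: real \<Rightarrow> real \<times> real \<Rightarrow> real^3.
      (\<forall>\<epsilon>>0. Ck_rect L 5 (v \<epsilon>) \<and>
         (\<forall>p\<in>omega L.
            pd2 L (\<lambda>q. v \<epsilon> q $ 1) p + pd1 L (v \<epsilon>) p \<bullet> tang \<gamma> (snd p) = 0 \<and>
            pd2 L (v \<epsilon>) p \<bullet> tang \<gamma> (snd p) = 0)) \<and>
      ((\<lambda>\<epsilon>. \<integral>\<^sup>+ p. ennreal ((pd1 L (\<lambda>q. v \<epsilon> q $ 1) p - g p)\<^sup>2) \<partial>lebesgue_on (omega L))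
         \<longlongrightarrow> 0) (at_right 0)}"

end

theory Submission
  imports Defs
begin

(* Call a field v on the closed rectangle admissible if it is C^5 and satisfies the two
   linearised isometry constraints of the set calG.  The set of attainable strains
   H = pd1 v_1 (v admissible) is closed under addition and contains
     (a) every monomial c x^i           (take v = x^(i+1)/(i+1) e1), and
     (b) every function -x^i Q(s), where Q'' = beta*kappa, Q(0) = Q'(0) - alpha = 0 and
         beta is a polynomial (take v = x^(i+1) psi1(s) + x^(i+2) psi2(s) with psi2 built
         from the moving frame tau, nu of the curve).
   Since kappa has only finitely many zeros, beta*kappa approximates any continuous
   function in L^1(0,1); integrating twice, (b) approximates x^i s^j uniformly.  Hence
   all bivariate polynomials, and by Stone-Weierstrass all continuous functions on the
   closed rectangle, are uniform limits of attainable strains.  Continuous functions are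
   dense in L^2(omega) (truncate, then use the pointwise approximation of measurable
   functions by continuous ones), which gives calG = L^2(omega). *)

abbreviation Dv :: "(real \<Rightarrow> 'a::real_normed_vector) \<Rightarrow> real \<Rightarrow> 'a" where
  "Dv f \<equiv> (\<lambda>t. vector_derivative f (at t within {0..1}))"

lemma Suc_numerals: "(6::nat) = Suc 5" "(5::nat) = Suc 4"
  by simp_all

lemma Ck_interval_cong:
  fixes f g :: "real \<Rightarrow> 'a::real_normed_vector"
  assumes "\<forall>t\<in>{0..1}. f t = g t" "Ck_interval k f"
  shows "Ck_interval k g"
  using assms
proof (induction k arbitrary: f g)
  case 0
  then show ?case using continuous_on_cong[OF refl, of "{0..1}" f g] by auto
next
  case (Suc k)
  have eq: "\<And>t. t \<in> {0..1} \<Longrightarrow> Dv f t = Dv g t"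
    using Suc.prems(1) by (intro vector_derivative_cong_eq) auto
  have c: "continuous_on {0..1} g"
    using Suc.prems continuous_on_cong[OF refl, of "{0..1}" f g] by auto
  have d: "g differentiable (at t within {0..1})" if "t \<in> {0..1}" for t
    by (rule differentiable_transform_within[where f=f and d=1]) (use Suc.prems that in auto)
  have "Ck_interval k (Dv g)"
    using Suc.IH[of "Dv f"] Suc.prems eq by auto
  then show ?case using c d by simp
qed

lemma Ck_interval_mono:
  fixes f :: "real \<Rightarrow> 'a::real_normed_vector"
  shows "Ck_interval (Suc k) f \<Longrightarrow> Ck_interval k f"
proof (induction k arbitrary: f)
  case 0 then show ?case by simp
next
  case (Suc k) then show ?case by (metis Ck_interval.simps(2))
qed

lemma Ck_interval_cont: "Ck_interval k f \<Longrightarrow> continuous_on {0..1} f"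
  by (cases k) auto

lemma Ck_SucD:
  fixes f :: "real \<Rightarrow> 'a::real_normed_vector"
  assumes "Ck_interval (Suc k) f" "t \<in> {0..1}"
  shows "(f has_vector_derivative Dv f t) (at t within {0..1})"
  using assms by (simp add: vector_derivative_works)

lemma Ck_SucD2:
  fixes f :: "real \<Rightarrow> 'a::real_normed_vector"
  shows "Ck_interval (Suc k) f \<Longrightarrow> Ck_interval k (Dv f)"
  by simp

lemma Ck_SucI:
  fixes f :: "real \<Rightarrow> 'a::euclidean_space"
  assumes d: "\<And>t. t\<in>{0..1} \<Longrightarrow> (f has_vector_derivative f' t) (at t within {0..1})"
    and c: "Ck_interval k f'"
  shows "Ck_interval (Suc k) f"
proof -
  have "continuous_on {0..1} f" using d by (rule continuous_on_vector_derivative)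
  moreover have "\<forall>t\<in>{0..1}. f differentiable (at t within {0..1})"
    using d differentiableI_vector by blast
  moreover have "\<forall>t\<in>{0..1}. f' t = Dv f t"
    using vector_derivative_within_closed_interval[OF zero_less_one _ d] by simp
  then have "Ck_interval k (Dv f)" by (rule Ck_interval_cong[OF _ c])
  ultimately show ?thesis by simp
qed

lemma Ck_add:
  fixes f g :: "real \<Rightarrow> 'a::euclidean_space"
  shows "Ck_interval k f \<Longrightarrow> Ck_interval k g \<Longrightarrow> Ck_interval k (\<lambda>t. f t + g t)"
proof (induction k arbitrary: f g)
  case 0 then show ?case by (auto intro: continuous_intros)
next
  case (Suc k)
  show ?case
    by (rule Ck_SucI[where f'="\<lambda>t. Dv f t + Dv g t"])
       (use Suc in \<open>auto intro!: has_vector_derivative_add Ck_SucD\<close>)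
qed

lemma Ck_linear:
  fixes f :: "real \<Rightarrow> 'a::euclidean_space" and J :: "'a \<Rightarrow> 'b::euclidean_space"
  assumes J: "bounded_linear J"
  shows "Ck_interval k f \<Longrightarrow> Ck_interval k (\<lambda>t. J (f t))"
proof (induction k arbitrary: f)
  case 0 then show ?case
    using J by (auto intro: continuous_on_compose2[OF linear_continuous_on[OF J]])
next
  case (Suc k)
  show ?case
    by (rule Ck_SucI[where f'="\<lambda>t. J (Dv f t)"])
       (use Suc in \<open>auto intro!: bounded_linear.has_vector_derivative[OF J] Ck_SucD\<close>)
qed

lemma Ck_bilinear:
  fixes f :: "real \<Rightarrow> 'a::euclidean_space" and g :: "real \<Rightarrow> 'b::euclidean_space"
    and prod :: "'a \<Rightarrow> 'b \<Rightarrow> 'c::euclidean_space"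
  assumes P: "bounded_bilinear prod"
  shows "Ck_interval k f \<Longrightarrow> Ck_interval k g \<Longrightarrow> Ck_interval k (\<lambda>t. prod (f t) (g t))"
proof (induction k arbitrary: f g)
  case 0 then show ?case
    using bounded_bilinear.continuous_on[OF P] by auto
next
  case (Suc k)
  have "Ck_interval k (\<lambda>t. prod (f t) (Dv g t))"
    using Suc.IH[OF Ck_interval_mono[OF Suc.prems(1)] Ck_SucD2[OF Suc.prems(2)]] .
  moreover have "Ck_interval k (\<lambda>t. prod (Dv f t) (g t))"
    using Suc.IH[OF Ck_SucD2[OF Suc.prems(1)] Ck_interval_mono[OF Suc.prems(2)]] .
  ultimately have "Ck_interval k (\<lambda>t. prod (f t) (Dv g t) + prod (Dv f t) (g t))"
    by (rule Ck_add)
  then show ?case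
    by (rule Ck_SucI[rotated])
       (use Suc in \<open>auto intro!: bounded_bilinear.has_vector_derivative[OF P] Ck_SucD\<close>)
qed

lemma Ck_const:
  fixes c :: "'a::euclidean_space"
  shows "Ck_interval k (\<lambda>t. c)"
proof (induction k arbitrary: c)
  case 0 then show ?case by simp
next
  case (Suc k) then show ?case by (intro Ck_SucI[where f'="\<lambda>t. 0"]) auto
qed

lemma Ck_poly:
  fixes p :: "real \<Rightarrow> real"
  shows "real_polynomial_function p \<Longrightarrow> Ck_interval k p"
proof (induction k arbitrary: p)
  case 0 then show ?case
    by (simp add: continuous_on_polymonial_function real_polynomial_function_eq)
next
  case (Suc k)
  obtain p' where p': "real_polynomial_function p'" "\<And>x. (p has_real_derivative p' x) (at x)"
    using has_real_derivative_polynomial_function[OF Suc.prems] by blast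
  show ?case
    by (rule Ck_SucI[where f'=p'])
       (use p' Suc.IH in \<open>auto simp: has_real_derivative_iff_has_vector_derivative[symmetric]
                              intro: has_field_derivative_at_within\<close>)
qed

lemma Ck_integral:
  fixes f :: "real \<Rightarrow> 'a::euclidean_space"
  assumes "Ck_interval k f"
  shows "Ck_interval (Suc k) (\<lambda>s. integral {0..s} f)"
  by (rule Ck_SucI[where f'=f])
     (use integral_has_vector_derivative[OF Ck_interval_cont[OF assms]] assms in auto)

lemma hvd_const_zero:
  fixes h :: "real \<Rightarrow> 'a::euclidean_space"
  assumes "\<forall>s\<in>{0..1}. h s = c" "t \<in> {0..1}" "(h has_vector_derivative D) (at t within {0..1})"
  shows "D = 0"
proof -
  have "((\<lambda>s. c) has_vector_derivative D) (at t within {0..1})"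
    by (rule has_vector_derivative_transform[OF assms(2) _ assms(3)]) (use assms(1) in auto)
  moreover have "((\<lambda>s. c) has_vector_derivative 0) (at t within {0..1})" by simp
  ultimately show ?thesis
    using vector_derivative_within_closed_interval[OF zero_less_one assms(2)] by metis
qed

lemma ftc01:
  fixes G :: "real \<Rightarrow> real"
  assumes "\<forall>x\<in>{0..1}. (G has_vector_derivative d x) (at x within {0..1})" "t \<in> {0..1}"
  shows "G t - G 0 = integral {0..t} d"
proof -
  have "(d has_integral (G t - G 0)) {0..t}"
  proof (rule fundamental_theorem_of_calculus)
    show "0 \<le> t" using assms by simp
    fix x assume "x \<in> {0..t}"
    then show "(G has_vector_derivative d x) (at x within {0..t})"
      using has_vector_derivative_within_subset[OF bspec[OF assms(1)], of x "{0..t}"] assms by auto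
  qed
  then show ?thesis by (simp add: integral_unique)
qed

lemma omega_cl_iff: "p \<in> omega_cl L \<longleftrightarrow> fst p \<in> {0..L} \<and> snd p \<in> {0..1}"
  by (cases p) (auto simp: omega_cl_def)

lemma omega_sub: "omega L \<subseteq> omega_cl L"
  by (auto simp: omega_def omega_cl_def)

lemma pd1_eq:
  fixes f :: "real \<times> real \<Rightarrow> 'a::euclidean_space"
  assumes "L > 0" "p \<in> omega_cl L"
    "((\<lambda>t. f (t, snd p)) has_vector_derivative D) (at (fst p) within {0..L})"
  shows "pd1 L f p = D"
  unfolding pd1_def using assms
  by (intro vector_derivative_within_closed_interval) (auto simp: omega_cl_iff)

lemma pd2_eq:
  fixes f :: "real \<times> real \<Rightarrow> 'a::euclidean_space"
  assumes "p \<in> omega_cl L"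
    "((\<lambda>s. f (fst p, s)) has_vector_derivative D) (at (snd p) within {0..1})"
  shows "pd2 L f p = D"
  unfolding pd2_def using assms
  by (intro vector_derivative_within_closed_interval) (auto simp: omega_cl_iff)

lemma pd1_works:
  "(\<lambda>t. f (t, snd p)) differentiable (at (fst p) within {0..L}) \<Longrightarrow>
   ((\<lambda>t. f (t, snd p)) has_vector_derivative pd1 L f p) (at (fst p) within {0..L})"
  unfolding pd1_def by (simp add: vector_derivative_works)

lemma pd2_works:
  "(\<lambda>s. f (fst p, s)) differentiable (at (snd p) within {0..1}) \<Longrightarrow>
   ((\<lambda>s. f (fst p, s)) has_vector_derivative pd2 L f p) (at (snd p) within {0..1})"
  unfolding pd2_def by (simp add: vector_derivative_works)

lemma Ck_rect_cong:
  fixes f g :: "real \<times> real \<Rightarrow> 'a::real_normed_vector"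
  assumes "\<forall>p\<in>omega_cl L. f p = g p" "Ck_rect L k f"
  shows "Ck_rect L k g"
  using assms
proof (induction k arbitrary: f g)
  case 0
  then show ?case using continuous_on_cong[OF refl, of "omega_cl L" f g] by auto
next
  case (Suc k)
  note eq = Suc.prems(1)
  have c: "continuous_on (omega_cl L) g"
    using Suc.prems continuous_on_cong[OF refl, of "omega_cl L" f g] by auto
  have e1: "\<forall>p\<in>omega_cl L. pd1 L f p = pd1 L g p"
    using eq unfolding pd1_def by (auto simp: omega_cl_iff intro!: vector_derivative_cong_eq)
  have e2: "\<forall>p\<in>omega_cl L. pd2 L f p = pd2 L g p"
    using eq unfolding pd2_def by (auto simp: omega_cl_iff intro!: vector_derivative_cong_eq)
  have d: "(\<lambda>t. g (t, snd p)) differentiable (at (fst p) within {0..L})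
         \<and> (\<lambda>s. g (fst p, s)) differentiable (at (snd p) within {0..1})"
    if p: "p \<in> omega_cl L" for p
  proof
    show "(\<lambda>t. g (t, snd p)) differentiable (at (fst p) within {0..L})"
      by (rule differentiable_transform_within[where f="\<lambda>t. f (t, snd p)" and d=1])
         (use Suc.prems p eq in \<open>auto simp: omega_cl_iff\<close>)
    show "(\<lambda>s. g (fst p, s)) differentiable (at (snd p) within {0..1})"
      by (rule differentiable_transform_within[where f="\<lambda>s. f (fst p, s)" and d=1])
         (use Suc.prems p eq in \<open>auto simp: omega_cl_iff\<close>)
  qed
  have "Ck_rect L k (pd1 L g)" "Ck_rect L k (pd2 L g)"
    using Suc.IH[OF e1] Suc.IH[OF e2] Suc.prems by simp_all
  then show ?case using c d by simp
qed

lemma Ck_rect_add: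
  fixes f g :: "real \<times> real \<Rightarrow> 'a::euclidean_space"
  assumes L: "L > 0"
  shows "Ck_rect L k f \<Longrightarrow> Ck_rect L k g \<Longrightarrow> Ck_rect L k (\<lambda>p. f p + g p)"
proof (induction k arbitrary: f g)
  case 0 then show ?case by (auto intro: continuous_intros)
next
  case (Suc k)
  have e1: "\<forall>p\<in>omega_cl L. pd1 L f p + pd1 L g p = pd1 L (\<lambda>p. f p + g p) p"
    using Suc.prems
    by (auto intro!: pd1_eq[OF L, symmetric] has_vector_derivative_add pd1_works)
  have e2: "\<forall>p\<in>omega_cl L. pd2 L f p + pd2 L g p = pd2 L (\<lambda>p. f p + g p) p"
    using Suc.prems
    by (auto intro!: pd2_eq[symmetric] has_vector_derivative_add pd2_works)
  have "Ck_rect L k (pd1 L (\<lambda>p. f p + g p))" "Ck_rect L k (pd2 L (\<lambda>p. f p + g p))"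
    using Ck_rect_cong[OF e1 Suc.IH] Ck_rect_cong[OF e2 Suc.IH] Suc.prems by simp_all
  moreover have "continuous_on (omega_cl L) (\<lambda>p. f p + g p)"
    using Suc.prems by (auto intro: continuous_intros)
  moreover have "\<forall>p\<in>omega_cl L.
      (\<lambda>t. f (t, snd p) + g (t, snd p)) differentiable (at (fst p) within {0..L})
    \<and> (\<lambda>s. f (fst p, s) + g (fst p, s)) differentiable (at (snd p) within {0..1})"
    using Suc.prems by (auto intro: differentiable_add)
  ultimately show ?case by simp
qed

lemma hvd_pow_scale:
  "((\<lambda>t. t ^ m *\<^sub>R c) has_vector_derivative ((real m * x ^ (m - 1)) *\<^sub>R c)) (at x within S)"
  using has_vector_derivative_scaleR[OF DERIV_pow[of m x S] has_vector_derivative_const[of c]]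
  by simp

lemma Ck_rect_prod:
  fixes \<psi> :: "real \<Rightarrow> 'a::euclidean_space"
  assumes L: "L > 0"
  shows "Ck_interval k \<psi> \<Longrightarrow> Ck_rect L k (\<lambda>p. fst p ^ m *\<^sub>R \<psi> (snd p))"
proof (induction k arbitrary: m \<psi>)
  case 0
  have "continuous_on (omega_cl L) (\<lambda>p. \<psi> (snd p))"
    by (rule continuous_on_compose2[OF Ck_interval_cont[OF 0] continuous_on_snd])
       (auto simp: omega_cl_iff)
  then show ?case by (auto intro!: continuous_intros)
next
  case (Suc k)
  have cont: "continuous_on (omega_cl L) (\<lambda>p. \<psi> (snd p))"
    by (rule continuous_on_compose2[OF Ck_interval_cont[OF Suc.prems] continuous_on_snd])
       (auto simp: omega_cl_iff)
  have d2: "((\<lambda>s. fst p ^ m *\<^sub>R \<psi> s) has_vector_derivative fst p ^ m *\<^sub>R Dv \<psi> (snd p))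
              (at (snd p) within {0..1})" if "p \<in> omega_cl L" for p
    using Ck_SucD[OF Suc.prems, of "snd p"] that
    by (auto simp: omega_cl_iff intro!: bounded_linear.has_vector_derivative[OF bounded_linear_scaleR_right])
  have e1: "\<forall>p\<in>omega_cl L. fst p ^ (m - 1) *\<^sub>R (real m *\<^sub>R \<psi> (snd p))
                             = pd1 L (\<lambda>p. fst p ^ m *\<^sub>R \<psi> (snd p)) p"
    using hvd_pow_scale by (auto intro!: pd1_eq[OF L, symmetric] simp: mult.commute)
  have e2: "\<forall>p\<in>omega_cl L. fst p ^ m *\<^sub>R Dv \<psi> (snd p) = pd2 L (\<lambda>p. fst p ^ m *\<^sub>R \<psi> (snd p)) p"
    using d2 by (auto intro!: pd2_eq[symmetric])
  have "Ck_interval k (\<lambda>s. real m *\<^sub>R \<psi> s)"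
    using Ck_linear[OF bounded_linear_scaleR_right Ck_interval_mono[OF Suc.prems]] .
  then have "Ck_rect L k (pd1 L (\<lambda>p. fst p ^ m *\<^sub>R \<psi> (snd p)))"
    using Ck_rect_cong[OF e1 Suc.IH] by blast
  moreover have "Ck_rect L k (pd2 L (\<lambda>p. fst p ^ m *\<^sub>R \<psi> (snd p)))"
    using Ck_rect_cong[OF e2 Suc.IH[OF Ck_SucD2[OF Suc.prems]]] .
  moreover have "continuous_on (omega_cl L) (\<lambda>p. fst p ^ m *\<^sub>R \<psi> (snd p))"
    using cont by (auto intro!: continuous_intros)
  moreover have "\<forall>p\<in>omega_cl L.
      (\<lambda>t. t ^ m *\<^sub>R \<psi> (snd p)) differentiable (at (fst p) within {0..L})
    \<and> (\<lambda>s. fst p ^ m *\<^sub>R \<psi> s) differentiable (at (snd p) within {0..1})"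
    using d2 hvd_pow_scale differentiableI_vector by blast
  ultimately show ?case by simp
qed

lemma pd1_component:
  fixes v :: "real \<times> real \<Rightarrow> 'a::euclidean_space ^ 'n"
  assumes L: "L > 0" and "Ck_rect L (Suc k) v" "p \<in> omega_cl L"
  shows "pd1 L (\<lambda>q. v q $ i) p = pd1 L v p $ i"
  using assms
  by (auto intro!: pd1_eq bounded_linear.has_vector_derivative[OF bounded_linear_vec_nth] pd1_works)

lemma pd2_component:
  fixes v :: "real \<times> real \<Rightarrow> 'a::euclidean_space ^ 'n"
  assumes "Ck_rect L (Suc k) v" "p \<in> omega_cl L"
  shows "pd2 L (\<lambda>q. v q $ i) p = pd2 L v p $ i"
  using assms
  by (auto intro!: pd2_eq bounded_linear.has_vector_derivative[OF bounded_linear_vec_nth] pd2_works)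

lemma pd1_add:
  fixes v w :: "real \<times> real \<Rightarrow> 'a::euclidean_space"
  assumes L: "L > 0" and "Ck_rect L (Suc k) v" "Ck_rect L (Suc k) w" "p \<in> omega_cl L"
  shows "pd1 L (\<lambda>q. v q + w q) p = pd1 L v p + pd1 L w p"
  using assms by (auto intro!: pd1_eq has_vector_derivative_add pd1_works)

lemma pd2_add:
  fixes v w :: "real \<times> real \<Rightarrow> 'a::euclidean_space"
  assumes "Ck_rect L (Suc k) v" "Ck_rect L (Suc k) w" "p \<in> omega_cl L"
  shows "pd2 L (\<lambda>q. v q + w q) p = pd2 L v p + pd2 L w p"
  using assms by (auto intro!: pd2_eq has_vector_derivative_add pd2_works)

declare Ck_rect.simps(2)[simp del] Ck_interval.simps(2)[simp del]

text \<open>The rotation by a right angle in the plane x_1 = 0 (so that nrm = rot90 \<circ> tang),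
  and the first unit vector, which spans the generators of the cylinder.\<close>
definition rot90 :: "real^3 \<Rightarrow> real^3" where
  "rot90 x = vector [0, - (x $ 3), x $ 2]"

definition e1 :: "real^3" where
  "e1 = vector [1, 0, 0]"

lemma rot90_nth: "rot90 x $ 1 = 0" "rot90 x $ 2 = - (x $ 3)" "rot90 x $ 3 = x $ 2"
  by (simp_all add: rot90_def)

lemma e1_nth: "e1 $ 1 = 1"
  by (simp add: e1_def)

lemma inner3: "(x::real^3) \<bullet> y = x$1 * y$1 + x$2 * y$2 + x$3 * y$3"
  by (simp add: inner_vec_def sum_3)

lemma bounded_linear_rot90: "bounded_linear rot90"
proof -
  have "linear rot90"
    by (rule linearI) (auto simp: vec_eq_iff forall_3 rot90_nth)
  then show ?thesis by (simp add: linear_conv_bounded_linear)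
qed

lemma rot90_antisym: "rot90 x \<bullet> y = - (x \<bullet> rot90 y)"
  by (simp add: inner3 rot90_nth algebra_simps)

lemma rot90_perp: "rot90 x \<bullet> x = 0"
  by (simp add: inner3 rot90_nth algebra_simps)

text \<open>A unit-speed C^6 curve in the plane x_1 = 0, with its moving frame (tau, nu) and
  curvature kappa.\<close>
locale planar_curve =
  fixes \<gamma> :: "real \<Rightarrow> real^3"
  assumes planar: "\<forall>s\<in>{0..1}. \<gamma> s $ 1 = 0"
    and smooth: "Ck_interval 6 \<gamma>"
    and arclength: "\<forall>s\<in>{0..1}. norm (tang \<gamma> s) = 1"
begin

abbreviation "\<tau> \<equiv> tang \<gamma>"
abbreviation "\<nu> \<equiv> nrm \<gamma>"
abbreviation "\<kappa> \<equiv> curv \<gamma>"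

lemma tau_Dv: "\<tau> = Dv \<gamma>"
  by (simp add: tang_def[abs_def])

lemma nu_rot90: "\<nu> = (\<lambda>s. rot90 (\<tau> s))"
  by (simp add: nrm_def[abs_def] rot90_def)

lemma kappa_eq: "\<kappa> = (\<lambda>s. Dv \<tau> s \<bullet> \<nu> s)"
  by (simp add: curv_def[abs_def])

lemma tau_C5: "Ck_interval 5 \<tau>"
  unfolding tau_Dv by (rule Ck_SucD2[OF smooth[unfolded Suc_numerals(1)]])

lemma nu_C5: "Ck_interval 5 \<nu>"
  unfolding nu_rot90 by (rule Ck_linear[OF bounded_linear_rot90 tau_C5])

lemma kappa_C4: "Ck_interval 4 \<kappa>"
  unfolding kappa_eq
  using Ck_bilinear[OF bounded_bilinear_inner Ck_SucD2 Ck_interval_mono]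
        tau_C5 nu_C5 unfolding Suc_numerals(2) by blast

lemma kappa_cont: "continuous_on {0..1} \<kappa>"
  by (rule Ck_interval_cont[OF kappa_C4])

lemma gamma_hvd: "t \<in> {0..1} \<Longrightarrow> (\<gamma> has_vector_derivative \<tau> t) (at t within {0..1})"
  using Ck_SucD[OF smooth[unfolded Suc_numerals(1)]] by (simp add: tau_Dv)

lemma tau_hvd: "t \<in> {0..1} \<Longrightarrow> (\<tau> has_vector_derivative Dv \<tau> t) (at t within {0..1})"
  using Ck_SucD[OF tau_C5[unfolded Suc_numerals(2)]] .

lemma nu_hvd: "t \<in> {0..1} \<Longrightarrow> (\<nu> has_vector_derivative rot90 (Dv \<tau> t)) (at t within {0..1})"
  unfolding nu_rot90 by (rule bounded_linear.has_vector_derivative[OF bounded_linear_rot90 tau_hvd])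

lemma tau1: "t \<in> {0..1} \<Longrightarrow> \<tau> t $ 1 = 0"
  using hvd_const_zero[OF planar _ bounded_linear.has_vector_derivative[OF bounded_linear_vec_nth gamma_hvd]]
  by simp

lemma nu1: "\<nu> t $ 1 = 0"
  by (simp add: nu_rot90 rot90_nth)

lemma Dtau1: "t \<in> {0..1} \<Longrightarrow> Dv \<tau> t $ 1 = 0"
  by (rule hvd_const_zero[where c=0, OF _ _ bounded_linear.has_vector_derivative[OF bounded_linear_vec_nth tau_hvd]])
     (use tau1 in auto)

lemma e1_tau: "t \<in> {0..1} \<Longrightarrow> e1 \<bullet> \<tau> t = 0"
  by (simp add: inner3 e1_def tau1)

lemma tau_tau: "t \<in> {0..1} \<Longrightarrow> \<tau> t \<bullet> \<tau> t = 1"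
  using arclength power2_norm_eq_inner[of "\<tau> t"] by simp

lemma nu_tau: "\<nu> t \<bullet> \<tau> t = 0"
  by (simp add: nu_rot90 rot90_perp)

lemma Dtau_tau: "t \<in> {0..1} \<Longrightarrow> Dv \<tau> t \<bullet> \<tau> t = 0"
proof -
  assume t: "t \<in> {0..1}"
  have "((\<lambda>s. \<tau> s \<bullet> \<tau> s) has_vector_derivative (\<tau> t \<bullet> Dv \<tau> t + Dv \<tau> t \<bullet> \<tau> t))
          (at t within {0..1})"
    using bounded_bilinear.has_vector_derivative[OF bounded_bilinear_inner tau_hvd[OF t] tau_hvd[OF t]] .
  then have "\<tau> t \<bullet> Dv \<tau> t + Dv \<tau> t \<bullet> \<tau> t = 0"
    by (rule hvd_const_zero[rotated, OF t]) (use tau_tau in auto)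
  then show ?thesis by (simp add: inner_commute)
qed

lemma Dnu_tau: "rot90 (Dv \<tau> t) \<bullet> \<tau> t = - \<kappa> t"
  by (simp add: rot90_antisym kappa_eq nu_rot90)

end

lemma pd1_separated:
  fixes \<psi> :: "real \<Rightarrow> 'a::euclidean_space"
  assumes "L > 0" "p \<in> omega_cl L"
  shows "pd1 L (\<lambda>q. fst q ^ m *\<^sub>R \<psi> (snd q)) p = (real m * fst p ^ (m - 1)) *\<^sub>R \<psi> (snd p)"
  by (rule pd1_eq[OF assms]) (use hvd_pow_scale[of m "\<psi> (snd p)" "fst p"] in simp)

lemma pd2_separated:
  fixes \<psi> :: "real \<Rightarrow> 'a::euclidean_space"
  assumes "p \<in> omega_cl L" "(\<psi> has_vector_derivative D) (at (snd p) within {0..1})"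
  shows "pd2 L (\<lambda>q. fst q ^ m *\<^sub>R \<psi> (snd q)) p = fst p ^ m *\<^sub>R D"
  by (rule pd2_eq[OF assms(1)])
     (simp add: bounded_linear.has_vector_derivative[OF bounded_linear_scaleR_right assms(2)])

lemma two_term_field:
  fixes \<psi>1 \<psi>2 :: "real \<Rightarrow> 'a::euclidean_space" and i :: nat
  assumes L: "L > 0" and c: "Ck_interval 5 \<psi>1" "Ck_interval 5 \<psi>2"
    and d: "\<And>s. s \<in> {0..1} \<Longrightarrow> (\<psi>1 has_vector_derivative \<psi>1' s) (at s within {0..1})"
           "\<And>s. s \<in> {0..1} \<Longrightarrow> (\<psi>2 has_vector_derivative \<psi>2' s) (at s within {0..1})"
  defines "v \<equiv> \<lambda>p. fst p ^ Suc i *\<^sub>R \<psi>1 (snd p) + fst p ^ Suc (Suc i) *\<^sub>R \<psi>2 (snd p)"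
  shows "Ck_rect L 5 v"
    and "p \<in> omega_cl L \<Longrightarrow> pd1 L v p =
           (real (Suc i) * fst p ^ i) *\<^sub>R \<psi>1 (snd p) + (real (Suc (Suc i)) * fst p ^ Suc i) *\<^sub>R \<psi>2 (snd p)"
    and "p \<in> omega_cl L \<Longrightarrow> pd2 L v p = fst p ^ Suc i *\<^sub>R \<psi>1' (snd p) + fst p ^ Suc (Suc i) *\<^sub>R \<psi>2' (snd p)"
proof -
  define v1 where "v1 = (\<lambda>p::real\<times>real. fst p ^ Suc i *\<^sub>R \<psi>1 (snd p))"
  define v2 where "v2 = (\<lambda>p::real\<times>real. fst p ^ Suc (Suc i) *\<^sub>R \<psi>2 (snd p))"
  have v: "v = (\<lambda>q. v1 q + v2 q)" by (simp add: v_def v1_def v2_def)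
  have C5: "Ck_rect L 5 v1" "Ck_rect L 5 v2"
    unfolding v1_def v2_def by (rule Ck_rect_prod[OF L c(1)], rule Ck_rect_prod[OF L c(2)])
  then have C: "Ck_rect L (Suc 4) v1" "Ck_rect L (Suc 4) v2"
    unfolding Suc_numerals(2) .
  show "Ck_rect L 5 v"
    unfolding v by (rule Ck_rect_add[OF L C5])
  assume p: "p \<in> omega_cl L"
  then have s: "snd p \<in> {0..1}" by (simp add: omega_cl_iff)
  show "pd1 L v p =
      (real (Suc i) * fst p ^ i) *\<^sub>R \<psi>1 (snd p) + (real (Suc (Suc i)) * fst p ^ Suc i) *\<^sub>R \<psi>2 (snd p)"
    unfolding v pd1_add[OF L C p] unfolding v1_def v2_def
    by (simp only: pd1_separated[OF L p] diff_Suc_1)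
  show "pd2 L v p = fst p ^ Suc i *\<^sub>R \<psi>1' (snd p) + fst p ^ Suc (Suc i) *\<^sub>R \<psi>2' (snd p)"
    unfolding v pd2_add[OF C p] unfolding v1_def v2_def
    by (simp only: pd2_separated[OF p d(1)[OF s]] pd2_separated[OF p d(2)[OF s]])
qed

locale cylinder = planar_curve +
  fixes L :: real
  assumes L_pos: "L > 0"
begin

definition admissible :: "(real \<times> real \<Rightarrow> real^3) \<Rightarrow> bool" where
  "admissible v \<longleftrightarrow> Ck_rect L 5 v \<and>
     (\<forall>p\<in>omega L. pd2 L (\<lambda>q. v q $ 1) p + pd1 L v p \<bullet> \<tau> (snd p) = 0 \<and>
                  pd2 L v p \<bullet> \<tau> (snd p) = 0)"

definition attainable :: "(real \<times> real \<Rightarrow> real) \<Rightarrow> bool" where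
  "attainable H \<longleftrightarrow> (\<exists>v. admissible v \<and> (\<forall>p\<in>omega L. pd1 L (\<lambda>q. v q $ 1) p = H p))"

lemma snd_omega: "p \<in> omega L \<Longrightarrow> snd p \<in> {0..1}"
  by (auto simp: omega_def)

lemma component_pd:
  fixes v :: "real \<times> real \<Rightarrow> real^3"
  assumes "Ck_rect L 5 v" "p \<in> omega L"
  shows "pd1 L (\<lambda>q. v q $ i) p = pd1 L v p $ i" "pd2 L (\<lambda>q. v q $ i) p = pd2 L v p $ i"
proof -
  have v: "Ck_rect L (Suc 4) v" using assms(1) by (simp only: Suc_numerals(2))
  have p: "p \<in> omega_cl L" using assms(2) omega_sub by blast
  show "pd1 L (\<lambda>q. v q $ i) p = pd1 L v p $ i" by (rule pd1_component[OF L_pos v p])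
  show "pd2 L (\<lambda>q. v q $ i) p = pd2 L v p $ i" by (rule pd2_component[OF v p])
qed

lemma admissible_iff:
  "admissible v \<longleftrightarrow> Ck_rect L 5 v \<and>
     (\<forall>p\<in>omega L. pd2 L v p $ 1 + pd1 L v p \<bullet> \<tau> (snd p) = 0 \<and> pd2 L v p \<bullet> \<tau> (snd p) = 0)"
proof (cases "Ck_rect L 5 v")
  case True
  then show ?thesis unfolding admissible_def using component_pd(2)[OF True] by auto
qed (simp add: admissible_def)

lemma attainable_iff:
  "attainable H \<longleftrightarrow> (\<exists>v. admissible v \<and> (\<forall>p\<in>omega L. pd1 L v p $ 1 = H p))"
proof -
  have "(\<forall>p\<in>omega L. pd1 L (\<lambda>q. v q $ 1) p = H p) \<longleftrightarrow> (\<forall>p\<in>omega L. pd1 L v p $ 1 = H p)"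
    if "admissible v" for v
  proof -
    have "Ck_rect L 5 v" using that unfolding admissible_def by blast
    then show ?thesis by (simp add: component_pd(1))
  qed
  then show ?thesis unfolding attainable_def by blast
qed

text \<open>The constraints are linear, so attainable strains form an additive class.\<close>
lemma attainable_add:
  assumes "attainable H1" "attainable H2"
  shows "attainable (\<lambda>p. H1 p + H2 p)"
proof -
  obtain v1 where v1: "admissible v1" "\<forall>p\<in>omega L. pd1 L v1 p $ 1 = H1 p"
    using assms(1) attainable_iff by blast
  obtain v2 where v2: "admissible v2" "\<forall>p\<in>omega L. pd1 L v2 p $ 1 = H2 p"
    using assms(2) attainable_iff by blast
  have c: "Ck_rect L 5 v1" "Ck_rect L 5 v2"
    using v1 v2 unfolding admissible_iff by blast+
  have pd: "pd1 L (\<lambda>q. v1 q + v2 q) p = pd1 L v1 p + pd1 L v2 p"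
           "pd2 L (\<lambda>q. v1 q + v2 q) p = pd2 L v1 p + pd2 L v2 p" if "p \<in> omega L" for p
  proof -
    have "Ck_rect L (Suc 4) v1" "Ck_rect L (Suc 4) v2" "p \<in> omega_cl L"
      using c that omega_sub unfolding Suc_numerals(2) by auto
    then show "pd1 L (\<lambda>q. v1 q + v2 q) p = pd1 L v1 p + pd1 L v2 p"
              "pd2 L (\<lambda>q. v1 q + v2 q) p = pd2 L v1 p + pd2 L v2 p"
      by (rule pd1_add[OF L_pos], rule pd2_add)
  qed
  have "admissible (\<lambda>q. v1 q + v2 q)"
    unfolding admissible_iff
  proof (intro conjI ballI)
    show "Ck_rect L 5 (\<lambda>q. v1 q + v2 q)" by (rule Ck_rect_add[OF L_pos c])
  next
    fix p assume p: "p \<in> omega L"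
    have "pd2 L v1 p $ 1 + pd1 L v1 p \<bullet> \<tau> (snd p) = 0" "pd2 L v1 p \<bullet> \<tau> (snd p) = 0"
         "pd2 L v2 p $ 1 + pd1 L v2 p \<bullet> \<tau> (snd p) = 0" "pd2 L v2 p \<bullet> \<tau> (snd p) = 0"
      using v1(1) v2(1) p unfolding admissible_iff by blast+
    then show "pd2 L (\<lambda>q. v1 q + v2 q) p $ 1 + pd1 L (\<lambda>q. v1 q + v2 q) p \<bullet> \<tau> (snd p) = 0"
              "pd2 L (\<lambda>q. v1 q + v2 q) p \<bullet> \<tau> (snd p) = 0"
      by (simp_all add: pd[OF p] inner_add_left)
  qed
  moreover have "\<forall>p\<in>omega L. pd1 L (\<lambda>q. v1 q + v2 q) p $ 1 = H1 p + H2 p"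
    using v1 v2 pd by auto
  ultimately show ?thesis unfolding attainable_iff by blast
qed

lemma attainable_x_pow: "attainable (\<lambda>p. c * fst p ^ i)"
proof -
  define w where "w = (c / real (Suc i)) *\<^sub>R e1"
  define v where "v = (\<lambda>p::real\<times>real. fst p ^ Suc i *\<^sub>R (\<lambda>_. w) (snd p))"
  have "Ck_rect L 5 v"
    unfolding v_def by (rule Ck_rect_prod[OF L_pos Ck_const])
  moreover have "pd1 L v p = (real (Suc i) * fst p ^ i) *\<^sub>R w"
    and "pd2 L v p = 0" if "p \<in> omega L" for p
    using pd1_separated[OF L_pos, of p "Suc i" "\<lambda>_. w"] pd2_separated[of p L "\<lambda>_. w" 0 "Suc i"]
      subsetD[OF omega_sub that] unfolding v_def by auto
  ultimately have "admissible v" "\<forall>p\<in>omega L. pd1 L v p $ 1 = c * fst p ^ i"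
    by (auto simp: admissible_iff w_def e1_tau[OF snd_omega] e1_nth)
  then show ?thesis unfolding attainable_iff by blast
qed

text \<open>The
  tangential field  Psi = A tau + beta nu  has  Psi \<bullet> tau = A  and, by the Frenet
  relations, Psi' \<bullet> tau = 0.\<close>
definition A_coeff :: "real \<Rightarrow> (real \<Rightarrow> real) \<Rightarrow> real \<Rightarrow> real" where
  "A_coeff \<alpha> \<beta> s = \<alpha> + integral {0..s} (\<lambda>r. \<beta> r * \<kappa> r)"

definition Q_coeff :: "real \<Rightarrow> (real \<Rightarrow> real) \<Rightarrow> real \<Rightarrow> real" where
  "Q_coeff \<alpha> \<beta> s = integral {0..s} (A_coeff \<alpha> \<beta>)"

definition frame_field :: "real \<Rightarrow> (real \<Rightarrow> real) \<Rightarrow> real \<Rightarrow> real^3" where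
  "frame_field \<alpha> \<beta> s = A_coeff \<alpha> \<beta> s *\<^sub>R \<tau> s + \<beta> s *\<^sub>R \<nu> s"

definition frame_field_deriv :: "real \<Rightarrow> (real \<Rightarrow> real) \<Rightarrow> (real \<Rightarrow> real) \<Rightarrow> real \<Rightarrow> real^3" where
  "frame_field_deriv \<alpha> \<beta> \<beta>' s =
     (A_coeff \<alpha> \<beta> s *\<^sub>R Dv \<tau> s + (\<beta> s * \<kappa> s) *\<^sub>R \<tau> s) + (\<beta> s *\<^sub>R rot90 (Dv \<tau> s) + \<beta>' s *\<^sub>R \<nu> s)"

context
  fixes \<alpha> :: real and \<beta> :: "real \<Rightarrow> real"
  assumes beta_poly: "real_polynomial_function \<beta>"
begin

lemma beta_kappa_C4: "Ck_interval 4 (\<lambda>r. \<beta> r * \<kappa> r)"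
  by (rule Ck_bilinear[OF bounded_bilinear_mult Ck_poly[OF beta_poly] kappa_C4])

lemma A_coeff_C5: "Ck_interval 5 (A_coeff \<alpha> \<beta>)"
  unfolding A_coeff_def[abs_def] Suc_numerals(2)
  by (rule Ck_add[OF Ck_const Ck_integral[OF beta_kappa_C4]])

lemma Q_coeff_C5: "Ck_interval 5 (Q_coeff \<alpha> \<beta>)"
  unfolding Q_coeff_def[abs_def] by (rule Ck_interval_mono[OF Ck_integral[OF A_coeff_C5]])

lemma frame_field_C5: "Ck_interval 5 (frame_field \<alpha> \<beta>)"
  unfolding frame_field_def[abs_def]
  by (intro Ck_add Ck_bilinear[OF bounded_bilinear_scaleR] A_coeff_C5 tau_C5 nu_C5 Ck_poly beta_poly)

lemma A_coeff_hvd: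
  "s \<in> {0..1} \<Longrightarrow> (A_coeff \<alpha> \<beta> has_vector_derivative \<beta> s * \<kappa> s) (at s within {0..1})"
  unfolding A_coeff_def[abs_def]
  using has_vector_derivative_add[OF has_vector_derivative_const
          integral_has_vector_derivative[OF Ck_interval_cont[OF beta_kappa_C4]]]
  by simp

lemma Q_coeff_hvd:
  "s \<in> {0..1} \<Longrightarrow> (Q_coeff \<alpha> \<beta> has_vector_derivative A_coeff \<alpha> \<beta> s) (at s within {0..1})"
  unfolding Q_coeff_def[abs_def]
  by (rule integral_has_vector_derivative[OF Ck_interval_cont[OF A_coeff_C5]])

lemma frame_field_hvd:
  assumes s: "s \<in> {0..1}" and \<beta>': "\<And>x. (\<beta> has_real_derivative \<beta>' x) (at x)"
  shows "(frame_field \<alpha> \<beta> has_vector_derivative frame_field_deriv \<alpha> \<beta> \<beta>' s) (at s within {0..1})"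
proof -
  have "(A_coeff \<alpha> \<beta> has_field_derivative \<beta> s * \<kappa> s) (at s within {0..1})"
    using A_coeff_hvd[OF s] by (simp add: has_real_derivative_iff_has_vector_derivative)
  moreover have "(\<beta> has_field_derivative \<beta>' s) (at s within {0..1})"
    using \<beta>' has_field_derivative_at_within by blast
  ultimately show ?thesis
    unfolding frame_field_def[abs_def] frame_field_deriv_def
    by (intro has_vector_derivative_add has_vector_derivative_scaleR tau_hvd nu_hvd s)
qed

end

text \<open>Psi and Psi' lie in the plane x_1 = 0, Psi \<bullet> tau = A, and Psi' \<bullet> tau = 0 because
  A tau' \<bullet> tau = 0 and the terms beta kappa tau and beta nu' cancel.\<close>
lemma frame_field_props:
  assumes "s \<in> {0..1}"
  shows "frame_field \<alpha> \<beta> s $ 1 = 0" "frame_field \<alpha> \<beta> s \<bullet> \<tau> s = A_coeff \<alpha> \<beta> s"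
    "frame_field_deriv \<alpha> \<beta> \<beta>' s $ 1 = 0" "frame_field_deriv \<alpha> \<beta> \<beta>' s \<bullet> \<tau> s = 0"
  using assms
  by (simp_all add: frame_field_def frame_field_deriv_def tau1 nu1 Dtau1 rot90_nth
                    inner_add_left tau_tau nu_tau Dtau_tau Dnu_tau)

lemma attainable_x_pow_Q:
  assumes \<beta>: "real_polynomial_function \<beta>"
  shows "attainable (\<lambda>p. - (fst p ^ i * Q_coeff \<alpha> \<beta> (snd p)))"
proof -
  obtain \<beta>' where \<beta>': "\<And>x. (\<beta> has_real_derivative \<beta>' x) (at x)"
    using has_real_derivative_polynomial_function[OF \<beta>] by blast
  define a where "a = 1 / real (Suc i)"
  define b where "b = 1 / (real (Suc i) * real (Suc (Suc i)))"
  define \<psi>1 where "\<psi>1 = (\<lambda>s. Q_coeff \<alpha> \<beta> s *\<^sub>R ((- a) *\<^sub>R e1))"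
  define \<psi>2 where "\<psi>2 = (\<lambda>s. b *\<^sub>R frame_field \<alpha> \<beta> s)"
  define v where "v = (\<lambda>p::real\<times>real. fst p ^ Suc i *\<^sub>R \<psi>1 (snd p) + fst p ^ Suc (Suc i) *\<^sub>R \<psi>2 (snd p))"
  have c1: "Ck_interval 5 \<psi>1"
    unfolding \<psi>1_def by (rule Ck_linear[OF bounded_linear_scaleR_left Q_coeff_C5[OF \<beta>]])
  have c2: "Ck_interval 5 \<psi>2"
    unfolding \<psi>2_def by (rule Ck_linear[OF bounded_linear_scaleR_right frame_field_C5[OF \<beta>]])
  have d1: "(\<psi>1 has_vector_derivative A_coeff \<alpha> \<beta> s *\<^sub>R ((- a) *\<^sub>R e1)) (at s within {0..1})"
    if "s \<in> {0..1}" for s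
    unfolding \<psi>1_def
    by (rule bounded_linear.has_vector_derivative[OF bounded_linear_scaleR_left Q_coeff_hvd[OF \<beta> that]])
  have d2: "(\<psi>2 has_vector_derivative b *\<^sub>R frame_field_deriv \<alpha> \<beta> \<beta>' s) (at s within {0..1})"
    if "s \<in> {0..1}" for s
    unfolding \<psi>2_def
    by (rule bounded_linear.has_vector_derivative[OF bounded_linear_scaleR_right frame_field_hvd[OF \<beta> that \<beta>']])
  note field = two_term_field[OF L_pos c1 c2 d1 d2, where i=i, folded v_def]
  have pd1v: "pd1 L v p
      = (real (Suc i) * fst p ^ i) *\<^sub>R \<psi>1 (snd p) + (real (Suc (Suc i)) * fst p ^ Suc i) *\<^sub>R \<psi>2 (snd p)"
   and pd2v: "pd2 L v p
      = fst p ^ Suc i *\<^sub>R (A_coeff \<alpha> \<beta> (snd p) *\<^sub>R ((- a) *\<^sub>R e1))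
        + fst p ^ Suc (Suc i) *\<^sub>R (b *\<^sub>R frame_field_deriv \<alpha> \<beta> \<beta>' (snd p))"
    if "p \<in> omega L" for p
    using field(2,3) omega_sub that by blast+
  have ab: "real (Suc (Suc i)) * b = a"
    by (simp add: a_def b_def)
  have "admissible v"
    unfolding admissible_iff
  proof (intro conjI ballI)
    show "Ck_rect L 5 v"
      by (rule field(1))
  next
    fix p assume p: "p \<in> omega L"
    note s = snd_omega[OF p]
    have "pd2 L v p $ 1 = - (a * fst p ^ Suc i * A_coeff \<alpha> \<beta> (snd p))"
      using frame_field_props(3)[OF s] by (simp add: pd2v[OF p] e1_nth)
    moreover have "pd1 L v p \<bullet> \<tau> (snd p)
                     = real (Suc (Suc i)) * b * fst p ^ Suc i * A_coeff \<alpha> \<beta> (snd p)"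
      using frame_field_props(2)[OF s] by (simp add: pd1v[OF p] \<psi>1_def \<psi>2_def inner_add_left inner_diff_left e1_tau[OF s])
    ultimately show "pd2 L v p $ 1 + pd1 L v p \<bullet> \<tau> (snd p) = 0"
      by (simp only: ab)
    show "pd2 L v p \<bullet> \<tau> (snd p) = 0"
      using frame_field_props(4)[OF s] by (simp add: pd2v[OF p] inner_add_left inner_diff_left e1_tau[OF s])
  qed
  moreover have "\<forall>p\<in>omega L. pd1 L v p $ 1 = - (fst p ^ i * Q_coeff \<alpha> \<beta> (snd p))"
    using frame_field_props(1)[OF snd_omega]
    by (simp add: pd1v \<psi>1_def \<psi>2_def e1_nth a_def)
  ultimately show ?thesis unfolding attainable_iff by blast
qed

end

lemma primitive_error:
  fixes a d G :: "real \<Rightarrow> real"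
  assumes a: "continuous_on {0..1} a" and d: "continuous_on {0..1} d"
    and G: "\<forall>x\<in>{0..1}. (G has_vector_derivative d x) (at x within {0..1})" "G 0 = 0"
    and t: "t \<in> {0..1}"
  shows "\<bar>integral {0..t} a - G t\<bar> \<le> integral {0..1} (\<lambda>r. \<bar>a r - d r\<bar>)"
proof -
  have sub: "{0..t} \<subseteq> {0..1}" using t by auto
  have ca: "continuous_on {0..1} (\<lambda>r. \<bar>a r - d r\<bar>)"
    using a d by (intro continuous_intros)
  have "integral {0..t} a - G t = integral {0..t} a - integral {0..t} d"
    using ftc01[OF G(1) t] G(2) by simp
  also have "\<dots> = integral {0..t} (\<lambda>r. a r - d r)"
    by (rule integral_diff[symmetric]; rule integrable_continuous_real)
       (use continuous_on_subset[OF a sub] continuous_on_subset[OF d sub] in auto)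
  finally have "\<bar>integral {0..t} a - G t\<bar> = norm (integral {0..t} (\<lambda>r. a r - d r))"
    by simp
  also have "\<dots> \<le> integral {0..t} (\<lambda>r. \<bar>a r - d r\<bar>)"
    by (rule integral_norm_bound_integral)
       (use continuous_on_subset[OF a sub] continuous_on_subset[OF d sub] continuous_on_subset[OF ca sub]
        in \<open>auto intro!: integrable_continuous_real continuous_intros\<close>)
  also have "\<dots> \<le> integral {0..1} (\<lambda>r. \<bar>a r - d r\<bar>)"
    by (rule integral_subset_le[OF sub])
       (use continuous_on_subset[OF ca sub] ca in \<open>auto intro!: integrable_continuous_real\<close>)
  finally show ?thesis .
qed

lemma iterated_primitive_error:
  fixes a d F G :: "real \<Rightarrow> real"
  assumes a: "continuous_on {0..1} a" and d: "continuous_on {0..1} d"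
    and G: "\<forall>x\<in>{0..1}. (G has_vector_derivative d x) (at x within {0..1})" "G 0 = 0"
    and F: "\<forall>x\<in>{0..1}. (F has_vector_derivative G x) (at x within {0..1})" "F 0 = 0"
    and s: "s \<in> {0..1}"
  shows "\<bar>integral {0..s} (\<lambda>t. integral {0..t} a) - F s\<bar> \<le> integral {0..1} (\<lambda>r. \<bar>a r - d r\<bar>)"
proof -
  define I where "I = integral {0..1} (\<lambda>r. \<bar>a r - d r\<bar>)"
  define A where "A = (\<lambda>t. integral {0..t} a)"
  have sub: "{0..s} \<subseteq> {0..1}" using s by auto
  have cA: "continuous_on {0..1} A"
    unfolding A_def by (rule continuous_on_vector_derivative[OF integral_has_vector_derivative[OF a]])
  have cG: "continuous_on {0..1} G" using G(1) by (intro continuous_on_vector_derivative) auto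
  have "integral {0..s} A - F s = integral {0..s} A - integral {0..s} G"
    using ftc01[OF F(1) s] F(2) by simp
  also have "\<dots> = integral {0..s} (\<lambda>r. A r - G r)"
    by (rule integral_diff[symmetric]; rule integrable_continuous_real)
       (use continuous_on_subset[OF cA sub] continuous_on_subset[OF cG sub] in auto)
  finally have "\<bar>integral {0..s} A - F s\<bar> = norm (integral {0..s} (\<lambda>r. A r - G r))" by simp
  also have "\<dots> \<le> I * (s - 0)"
    using primitive_error[OF a d G] sub continuous_on_subset[OF cA sub] continuous_on_subset[OF cG sub]
    unfolding A_def I_def
    by (intro integral_bound)
       (use s in \<open>auto intro!: continuous_intros\<close>)
  also have "\<dots> \<le> I"
  proof -
    have "0 \<le> I" unfolding I_def
      by (rule integral_nonneg) (use a d in \<open>auto intro!: integrable_continuous_real continuous_intros\<close>)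
    then show ?thesis using s by (auto intro: mult_left_le)
  qed
  finally show ?thesis unfolding A_def I_def .
qed

text \<open>The regularised defect |d| delta/(kappa^2 + delta) tends to 0 in L^1 as delta \<rightarrow> 0
  (dominated convergence); this is where the finiteness of the zero set of kappa enters.\<close>
lemma regularised_defect_small:
  fixes \<kappa> d :: "real \<Rightarrow> real"
  assumes \<kappa>: "continuous_on {0..1} \<kappa>" "finite {s\<in>{0..1}. \<kappa> s = 0}"
    and d: "continuous_on {0..1} d" and e: "e > 0"
  shows "\<exists>\<delta>>0. integral {0..1} (\<lambda>s. \<bar>d s\<bar> * (\<delta> / ((\<kappa> s)\<^sup>2 + \<delta>))) < e"
proof -
  define Z where "Z = {s\<in>{0..1}. \<kappa> s = 0}"
  have negZ: "negligible Z" using \<kappa>(2) unfolding Z_def by (rule negligible_finite)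
  define \<delta> where "\<delta> = (\<lambda>n::nat. inverse (real (Suc n)))"
  have \<delta>_pos: "\<delta> n > 0" for n by (simp add: \<delta>_def)
  have den_pos: "(\<kappa> x)\<^sup>2 + \<delta> n > 0" for x n using \<delta>_pos[of n] by (simp add: add_nonneg_pos)
  then have den_nz: "(\<kappa> x)\<^sup>2 + \<delta> n \<noteq> 0" for x n by (metis less_irrefl)
  define f where "f = (\<lambda>n s. \<bar>d s\<bar> * (\<delta> n / ((\<kappa> s)\<^sup>2 + \<delta> n)))"
  define g where "g = (\<lambda>n s. if \<kappa> s = 0 then 0 else f n s)"
  have fint: "f n integrable_on {0..1}" for n
    unfolding f_def using d \<kappa>(1)
    by (intro integrable_continuous_real continuous_intros) (auto simp: den_nz)
  have gint: "g n integrable_on {0..1}" for n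
    by (rule integrable_spike[OF fint negZ]) (auto simp: g_def Z_def)
  have gle: "norm (g n s) \<le> \<bar>d s\<bar>" for n s
  proof -
    define q where "q = \<delta> n / ((\<kappa> s)\<^sup>2 + \<delta> n)"
    have "0 \<le> q" "q \<le> 1"
      using \<delta>_pos[of n] den_pos[of s n] by (auto simp: q_def)
    then have "\<bar>f n s\<bar> \<le> \<bar>d s\<bar>"
      unfolding f_def q_def[symmetric] by (simp add: abs_mult mult_left_le)
    then show ?thesis
      by (simp add: g_def)
  qed
  have gconv: "(\<lambda>n. g n s) \<longlonglongrightarrow> 0" for s
  proof (cases "\<kappa> s = 0")
    case False
    have "(\<lambda>n. \<bar>d s\<bar> * (\<delta> n / ((\<kappa> s)\<^sup>2 + \<delta> n))) \<longlonglongrightarrow> \<bar>d s\<bar> * (0 / ((\<kappa> s)\<^sup>2 + 0))"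
      unfolding \<delta>_def using False by (intro tendsto_intros LIMSEQ_inverse_real_of_nat) auto
    then show ?thesis using False by (simp add: g_def f_def)
  qed (simp add: g_def)
  have "(\<lambda>s. \<bar>d s\<bar>) integrable_on {0..1}"
    using d by (intro integrable_continuous_real continuous_intros)
  from dominated_convergence(2)[OF gint this gle gconv]
  have "(\<lambda>n. integral {0..1} (g n)) \<longlonglongrightarrow> 0" by simp
  then obtain n where "integral {0..1} (g n) < e"
    using e by (metis order_tendstoD(2) eventually_sequentially order_refl)
  moreover have "integral {0..1} (f n) = integral {0..1} (g n)"
    by (rule integral_spike[OF negZ]) (auto simp: g_def Z_def)
  ultimately show ?thesis
    using \<delta>_pos[of n] unfolding f_def by (intro exI[of _ "\<delta> n"]) simp
qed

text \<open>Approximation of a continuous d in L^1(0,1) by products beta kappa with beta a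
  polynomial: approximate the regularised quotient d kappa/(kappa^2 + delta) uniformly.\<close>
lemma L1_approx_poly_times:
  fixes \<kappa> d :: "real \<Rightarrow> real"
  assumes \<kappa>: "continuous_on {0..1} \<kappa>" "finite {s\<in>{0..1}. \<kappa> s = 0}"
    and d: "continuous_on {0..1} d" and e: "e > 0"
  shows "\<exists>\<beta>. real_polynomial_function \<beta> \<and> integral {0..1} (\<lambda>r. \<bar>\<beta> r * \<kappa> r - d r\<bar>) < e"
proof -
  obtain K where K: "K > 0" "\<forall>s\<in>{0..1}. \<bar>\<kappa> s\<bar> \<le> K"
    using compact_imp_bounded[OF compact_continuous_image[OF \<kappa>(1) compact_Icc]]
    unfolding bounded_pos by auto
  obtain \<delta> where \<delta>: "\<delta> > 0" and defect: "integral {0..1} (\<lambda>s. \<bar>d s\<bar> * (\<delta> / ((\<kappa> s)\<^sup>2 + \<delta>))) < e / 2"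
    using regularised_defect_small[OF \<kappa> d, of "e/2"] e by auto
  define f where "f = (\<lambda>s. \<bar>d s\<bar> * (\<delta> / ((\<kappa> s)\<^sup>2 + \<delta>)))"
  define h where "h = (\<lambda>s. d s * \<kappa> s / ((\<kappa> s)\<^sup>2 + \<delta>))"
  have den: "(\<kappa> s)\<^sup>2 + \<delta> > 0" for s using \<delta> by (simp add: add_nonneg_pos)
  then have den_nz: "(\<kappa> s)\<^sup>2 + \<delta> \<noteq> 0" for s by (metis less_irrefl)
  have fcont: "continuous_on {0..1} f" and hcont: "continuous_on {0..1} h"
    unfolding f_def h_def using d \<kappa>(1) by (auto intro!: continuous_intros simp: den_nz)
  define \<epsilon> where "\<epsilon> = e / (2 * (K + 1))"
  have \<epsilon>: "\<epsilon> > 0" "K * \<epsilon> < e / 2" using e K by (simp_all add: \<epsilon>_def field_simps)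
  obtain \<beta> where \<beta>: "real_polynomial_function \<beta>" "\<And>x. x \<in> {0..1} \<Longrightarrow> \<bar>h x - \<beta> x\<bar> < \<epsilon>"
    using Stone_Weierstrass_real_polynomial_function[OF compact_Icc hcont \<epsilon>(1)] by blast
  have pointwise: "\<bar>\<beta> s * \<kappa> s - d s\<bar> \<le> K * \<epsilon> + f s" if s: "s \<in> {0..1}" for s
  proof -
    have "h s * \<kappa> s - d s = - (d s * (\<delta> / ((\<kappa> s)\<^sup>2 + \<delta>)))"
      unfolding h_def using den[of s] by (simp add: field_simps power2_eq_square)
    then have "\<bar>h s * \<kappa> s - d s\<bar> = f s"
      unfolding f_def using \<delta> den[of s] by (simp add: abs_mult)
    moreover have "\<bar>\<beta> s * \<kappa> s - h s * \<kappa> s\<bar> = \<bar>\<kappa> s\<bar> * \<bar>h s - \<beta> s\<bar>"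
      by (simp add: abs_mult[symmetric] algebra_simps abs_minus_commute)
    moreover have "\<bar>\<kappa> s\<bar> * \<bar>h s - \<beta> s\<bar> \<le> K * \<epsilon>"
      using K(2) s \<beta>(2)[OF s] by (intro mult_mono) auto
    ultimately show ?thesis by linarith
  qed
  have "integral {0..1} (\<lambda>r. \<bar>\<beta> r * \<kappa> r - d r\<bar>) \<le> integral {0..1} (\<lambda>r. K * \<epsilon> + f r)"
    using \<beta>(1) \<kappa>(1) d fcont pointwise
    by (intro integral_le)
       (auto intro!: integrable_continuous_real continuous_intros
             simp: continuous_on_polymonial_function real_polynomial_function_eq)
  also have "\<dots> = K * \<epsilon> + integral {0..1} f"
    by (subst integral_add) (auto intro: integrable_continuous_real fcont)
  also have "\<dots> < e"
    using \<epsilon>(2) defect unfolding f_def by linarith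
  finally show ?thesis using \<beta>(1) by auto
qed

inductive poly2 :: "(real \<times> real \<Rightarrow> real) \<Rightarrow> bool" where
  monomial: "poly2 (\<lambda>p. c * fst p ^ i * snd p ^ j)"
| add: "poly2 f \<Longrightarrow> poly2 g \<Longrightarrow> poly2 (\<lambda>p. f p + g p)"

lemma poly2_mult_monomial: "poly2 g \<Longrightarrow> poly2 (\<lambda>p. (c * fst p ^ i * snd p ^ j) * g p)"
proof (induction rule: poly2.induct)
  case (monomial c' i' j')
  have "(\<lambda>p. (c * fst p ^ i * snd p ^ j) * (c' * fst p ^ i' * snd p ^ j')) =
        (\<lambda>p. (c * c') * fst p ^ (i + i') * snd p ^ (j + j'))"
    by (auto simp: power_add)
  then show ?case using poly2.monomial by metis
next
  case (add f g)
  then show ?case using poly2.add[OF add.IH] by (simp add: distrib_left)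
qed

lemma poly2_mult: "poly2 f \<Longrightarrow> poly2 g \<Longrightarrow> poly2 (\<lambda>p. f p * g p)"
proof (induction arbitrary: g rule: poly2.induct)
  case (monomial c i j)
  then show ?case by (rule poly2_mult_monomial)
next
  case (add f1 f2)
  then show ?case using poly2.add[OF add.IH(1)[OF add.prems] add.IH(2)[OF add.prems]]
    by (simp add: distrib_right)
qed

lemma poly2_dense:
  assumes "continuous_on (omega_cl L) f" "e > 0"
  shows "\<exists>g. poly2 g \<and> (\<forall>x\<in>omega_cl L. \<bar>f x - g x\<bar> < e)"
proof (rule Stone_Weierstrass_HOL[OF _ _ _ _ _ _ assms])
  show "compact (omega_cl L)"
    unfolding omega_cl_def by (intro compact_Times compact_Icc)
  show "poly2 (\<lambda>x. c)" for c
    using poly2.monomial[of c 0 0] by simp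
  show "poly2 f \<Longrightarrow> continuous_on (omega_cl L) f" for f
    by (induction rule: poly2.induct) (auto intro!: continuous_intros)
  show "poly2 f \<and> poly2 g \<Longrightarrow> poly2 (\<lambda>x. f x + g x)" for f g
    by (auto intro: poly2.add)
  show "poly2 f \<and> poly2 g \<Longrightarrow> poly2 (\<lambda>x. f x * g x)" for f g
    by (auto intro: poly2_mult)
  have "poly2 fst" "poly2 snd"
    using poly2.monomial[of 1 1 0] poly2.monomial[of 1 0 1] by simp_all
  then show "x \<in> omega_cl L \<and> y \<in> omega_cl L \<and> x \<noteq> y \<Longrightarrow> \<exists>f. poly2 f \<and> f x \<noteq> f y" for x y
    by (metis prod_eq_iff)
qed

locale curved_cylinder = cylinder +
  assumes finite_zeros: "finite {s\<in>{0..1}. \<kappa> s = 0}"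
begin

text \<open>Profiles c s^j (j \<ge> 1) are uniform limits on [0,1] of the functions Q = Q_coeff alpha beta:
  exactly for j = 1 (beta = 0), and for j \<ge> 2 by matching Q'' = beta kappa with the
  second derivative of c s^j in L^1.\<close>
lemma profile_approx:
  assumes j: "j \<ge> 1" and e: "e > 0"
  shows "\<exists>\<alpha> \<beta>. real_polynomial_function \<beta> \<and> (\<forall>s\<in>{0..1}. \<bar>Q_coeff \<alpha> \<beta> s - c * s ^ j\<bar> < e)"
proof (cases "j = 1")
  case True
  have "A_coeff c (\<lambda>_. 0) = (\<lambda>_. c)"
    by (simp add: A_coeff_def[abs_def])
  then have "Q_coeff c (\<lambda>_. 0) s = c * s ^ j" if "s \<in> {0..1}" for s
    using that True by (simp add: Q_coeff_def)
  then show ?thesis using e by (intro exI[of _ c] exI[of _ "\<lambda>_. 0"]) auto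
next
  case False
  then obtain m where m: "j = Suc (Suc m)" using j by (metis One_nat_def Suc_le_D le_SucE)
  define G where "G = (\<lambda>s::real. c * (real j * s ^ Suc m))"
  define d where "d = (\<lambda>s::real. c * (real j * (real (Suc m) * s ^ m)))"
  have dF: "((\<lambda>s. c * s ^ j) has_vector_derivative G x) (at x within {0..1})" for x
    unfolding G_def m has_real_derivative_iff_has_vector_derivative[symmetric]
    by (rule derivative_eq_intros DERIV_pow refl | simp)+
  have dG: "(G has_vector_derivative d x) (at x within {0..1})" for x
    unfolding G_def d_def has_real_derivative_iff_has_vector_derivative[symmetric]
    by (rule derivative_eq_intros DERIV_pow refl | simp)+
  have dc: "continuous_on {0..1} d" unfolding d_def by (intro continuous_intros)
  obtain \<beta> where \<beta>: "real_polynomial_function \<beta>" "integral {0..1} (\<lambda>r. \<bar>\<beta> r * \<kappa> r - d r\<bar>) < e"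
    using L1_approx_poly_times[OF kappa_cont finite_zeros dc e] by blast
  have "\<bar>Q_coeff 0 \<beta> s - c * s ^ j\<bar> < e" if s: "s \<in> {0..1}" for s
    using iterated_primitive_error[OF Ck_interval_cont[OF beta_kappa_C4[OF \<beta>(1)]] dc _ _ _ _ s, of G "\<lambda>s. c * s ^ j"]
      dF dG \<beta>(2) m
    by (simp add: Q_coeff_def A_coeff_def[abs_def] G_def)
  then show ?thesis using \<beta>(1) by blast
qed

definition unif_attainable :: "(real \<times> real \<Rightarrow> real) \<Rightarrow> bool" where
  "unif_attainable H \<longleftrightarrow> (\<forall>\<eta>>0. \<exists>H'. attainable H' \<and> (\<forall>p\<in>omega L. \<bar>H p - H' p\<bar> < \<eta>))"

lemma unif_attainable_add:
  assumes "unif_attainable H1" "unif_attainable H2"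
  shows "unif_attainable (\<lambda>p. H1 p + H2 p)"
  unfolding unif_attainable_def
proof (intro allI impI)
  fix \<eta> :: real assume \<eta>: "\<eta> > 0"
  obtain H1' where 1: "attainable H1'" "\<forall>p\<in>omega L. \<bar>H1 p - H1' p\<bar> < \<eta>/2"
    using assms(1) \<eta> unfolding unif_attainable_def by (meson half_gt_zero)
  obtain H2' where 2: "attainable H2'" "\<forall>p\<in>omega L. \<bar>H2 p - H2' p\<bar> < \<eta>/2"
    using assms(2) \<eta> unfolding unif_attainable_def by (meson half_gt_zero)
  have "\<forall>p\<in>omega L. \<bar>H1 p + H2 p - (H1' p + H2' p)\<bar> < \<eta>"
    using 1(2) 2(2) by (smt (verit, best) field_sum_of_halves)
  then show "\<exists>H'. attainable H' \<and> (\<forall>p\<in>omega L. \<bar>H1 p + H2 p - H' p\<bar> < \<eta>)"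
    using attainable_add[OF 1(1) 2(1)] by blast
qed

text \<open>Every monomial is a uniform limit of attainable strains: c x^i directly, and
  c x^i s^j = -x^i (-c s^j) via the profile approximation, using x^i \<le> L^i on omega.\<close>
lemma unif_attainable_monomial: "unif_attainable (\<lambda>p. c * fst p ^ i * snd p ^ j)"
proof (cases "j = 0")
  case True
  then show ?thesis
    using attainable_x_pow[of c i] unfolding unif_attainable_def by force
next
  case False
  show ?thesis unfolding unif_attainable_def
  proof (intro allI impI)
    fix \<eta> :: real assume \<eta>: "\<eta> > 0"
    have Li: "0 \<le> L ^ i" using L_pos by simp
    obtain \<alpha> \<beta> where \<beta>: "real_polynomial_function \<beta>"
      and err: "\<forall>s\<in>{0..1}. \<bar>Q_coeff \<alpha> \<beta> s - (- c) * s ^ j\<bar> < \<eta> / (L ^ i + 1)"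
      using profile_approx[of j "\<eta> / (L ^ i + 1)" "- c"] False \<eta> Li by auto
    have "\<bar>c * fst p ^ i * snd p ^ j - - (fst p ^ i * Q_coeff \<alpha> \<beta> (snd p))\<bar> < \<eta>"
      if p: "p \<in> omega L" for p
    proof -
      have x: "0 < fst p" "fst p < L" using p by (auto simp: omega_def)
      have "c * fst p ^ i * snd p ^ j - - (fst p ^ i * Q_coeff \<alpha> \<beta> (snd p))
              = fst p ^ i * (Q_coeff \<alpha> \<beta> (snd p) - (- c) * snd p ^ j)"
        by (simp add: algebra_simps)
      then have "\<bar>c * fst p ^ i * snd p ^ j - - (fst p ^ i * Q_coeff \<alpha> \<beta> (snd p))\<bar>
              = fst p ^ i * \<bar>Q_coeff \<alpha> \<beta> (snd p) - (- c) * snd p ^ j\<bar>"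
        using x by (simp add: abs_mult)
      also have "\<dots> \<le> L ^ i * (\<eta> / (L ^ i + 1))"
        using x err snd_omega[OF p] by (intro mult_mono power_mono) (auto simp: less_imp_le)
      also have "\<dots> < \<eta>"
        using \<eta> Li by (simp add: field_simps)
      finally show ?thesis .
    qed
    then show "\<exists>H'. attainable H' \<and> (\<forall>p\<in>omega L. \<bar>c * fst p ^ i * snd p ^ j - H' p\<bar> < \<eta>)"
      using attainable_x_pow_Q[OF \<beta>] by blast
  qed
qed

lemma continuous_unif_attainable:
  assumes "continuous_on (omega_cl L) f" "e > 0"
  shows "\<exists>H. attainable H \<and> (\<forall>p\<in>omega L. \<bar>f p - H p\<bar> < e)"
proof -
  obtain g where g: "poly2 g" "\<forall>x\<in>omega_cl L. \<bar>f x - g x\<bar> < e/2"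
    using poly2_dense[OF assms(1)] assms(2) by (meson half_gt_zero)
  have "unif_attainable g"
    using g(1) by induction (auto intro: unif_attainable_monomial unif_attainable_add)
  then obtain H where H: "attainable H" "\<forall>p\<in>omega L. \<bar>g p - H p\<bar> < e/2"
    using assms(2) unfolding unif_attainable_def by (meson half_gt_zero)
  have "\<forall>p\<in>omega L. \<bar>f p - H p\<bar> < e"
  proof
    fix p assume "p \<in> omega L"
    then have "\<bar>f p - g p\<bar> < e/2" "\<bar>g p - H p\<bar> < e/2"
      using g(2) H(2) omega_sub by auto
    then show "\<bar>f p - H p\<bar> < e" by linarith
  qed
  then show ?thesis using H(1) by blast
qed

end

definition clip :: "real \<Rightarrow> real \<Rightarrow> real" where
  "clip m y = max (- m) (min m y)"

lemma clip_cont: "continuous_on UNIV (clip m)"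
  unfolding clip_def by (intro continuous_intros)

lemma clip_diff_bound: "m \<ge> 0 \<Longrightarrow> (clip m a - clip m b)\<^sup>2 \<le> 4 * m\<^sup>2"
proof -
  assume m: "m \<ge> 0"
  have "\<bar>clip m a - clip m b\<bar> \<le> 2 * m" using m by (simp add: clip_def)
  then have "\<bar>clip m a - clip m b\<bar>\<^sup>2 \<le> (2 * m)\<^sup>2" by (intro power_mono) auto
  then show ?thesis by (simp add: power_mult_distrib)
qed

lemma clip_error_bound: "m \<ge> 0 \<Longrightarrow> (clip m y - y)\<^sup>2 \<le> y\<^sup>2"
proof -
  assume "m \<ge> 0"
  then have "\<bar>clip m y - y\<bar> \<le> \<bar>y\<bar>" unfolding clip_def by (auto simp: max_def min_def abs_if)
  then have "\<bar>clip m y - y\<bar>\<^sup>2 \<le> \<bar>y\<bar>\<^sup>2" by (intro power_mono) auto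
  then show ?thesis by simp
qed

lemma clip_tendsto: "(\<lambda>m::nat. clip (real m) y) \<longlonglongrightarrow> y"
proof (rule tendsto_eventually)
  obtain N :: nat where "\<bar>y\<bar> \<le> real N" using real_arch_simple by blast
  then show "\<forall>\<^sub>F m in sequentially. clip (real m) y = y"
    unfolding eventually_sequentially by (intro exI[of _ N]) (auto simp: clip_def)
qed

lemma ennreal_square_add_le:
  "ennreal ((a + b)\<^sup>2) \<le> 2 * ennreal (a\<^sup>2) + 2 * ennreal (b\<^sup>2)"
proof -
  have "(a + b)\<^sup>2 \<le> 2 * a\<^sup>2 + 2 * b\<^sup>2"
    using zero_le_power2[of "a - b"] unfolding power2_eq_square by (simp add: algebra_simps)
  then have "ennreal ((a + b)\<^sup>2) \<le> ennreal (2 * a\<^sup>2) + ennreal (2 * b\<^sup>2)"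
    by (simp add: ennreal_leI flip: ennreal_plus)
  then show ?thesis by (simp add: ennreal_mult)
qed

lemma ennreal_double_sum_less:
  fixes A B :: ennreal
  assumes "A < ennreal a" "B < ennreal b"
  shows "2 * A + 2 * B < ennreal (2 * a + 2 * b)"
proof -
  obtain x where x: "A = ennreal x" "0 \<le> x"
    using assms(1) by (cases A rule: ennreal_cases) auto
  obtain y where y: "B = ennreal y" "0 \<le> y"
    using assms(2) by (cases B rule: ennreal_cases) auto
  have "x < a" "y < b" using assms x y by (auto simp: ennreal_less_iff)
  moreover have "2 * ennreal x + 2 * ennreal y = ennreal (2 * x + 2 * y)"
    using x(2) y(2) by (simp add: ennreal_plus ennreal_mult)
  ultimately show ?thesis
    using x y ennreal_less_iff[of "2 * x + 2 * y" "2 * a + 2 * b"] by (simp del: ennreal_plus)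
qed

lemma ennreal_tendsto_zero_below:
  fixes f :: "nat \<Rightarrow> ennreal"
  assumes "f \<longlonglongrightarrow> 0" "e > 0"
  shows "\<exists>n. f n < ennreal e"
  using order_tendstoD(2)[OF assms(1), of "ennreal e"] assms(2)
  by (auto simp: eventually_sequentially)

lemma L2_truncation:
  assumes g[measurable]: "g \<in> borel_measurable M" and gi: "(\<integral>\<^sup>+ p. ennreal ((g p)\<^sup>2) \<partial>M) < \<infinity>"
    and e: "e > 0"
  shows "\<exists>m::nat. (\<integral>\<^sup>+ p. ennreal ((clip (real m) (g p) - g p)\<^sup>2) \<partial>M) < ennreal e"
proof -
  have [measurable]: "clip m \<in> borel_measurable borel" for m
    by (rule borel_measurable_continuous_onI[OF clip_cont])
  have "(\<lambda>m::nat. \<integral>\<^sup>+ p. ennreal ((clip (real m) (g p) - g p)\<^sup>2) \<partial>M) \<longlonglongrightarrow> (\<integral>\<^sup>+ p. ennreal 0 \<partial>M)"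
  proof (rule nn_integral_dominated_convergence[where w="\<lambda>p. ennreal ((g p)\<^sup>2)"])
    show "\<And>j. AE x in M. ennreal ((clip (real j) (g x) - g x)\<^sup>2) \<le> ennreal ((g x)\<^sup>2)"
      using clip_error_bound by (auto intro: ennreal_leI)
    show "AE x in M. (\<lambda>i. ennreal ((clip (real i) (g x) - g x)\<^sup>2)) \<longlonglongrightarrow> ennreal 0"
      by (intro AE_I2 tendsto_ennrealI) (use clip_tendsto in \<open>auto intro!: tendsto_eq_intros\<close>)
  qed (use gi in measurable)
  then show ?thesis using ennreal_tendsto_zero_below e by simp
qed

text \<open>Step 2: on a set of finite measure, a truncated measurable function is the L^2 limit
  of truncations of continuous functions (measurable functions are a.e. limits of
  continuous ones, and bounded convergence applies).\<close>
lemma L2_clip_continuous_approx: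
  fixes g :: "'a::euclidean_space \<Rightarrow> real"
  assumes S: "S \<in> sets lebesgue" "emeasure lebesgue S < \<infinity>"
    and g: "g \<in> borel_measurable (lebesgue_on S)" and m: "m \<ge> 0" and e: "e > 0"
  shows "\<exists>c. continuous_on UNIV c \<and>
    (\<integral>\<^sup>+ p. ennreal ((clip m (c p) - clip m (g p))\<^sup>2) \<partial>lebesgue_on S) < ennreal e"
proof -
  define M where "M = lebesgue_on S"
  have [measurable]: "g \<in> borel_measurable M" "clip m \<in> borel_measurable borel"
    using g borel_measurable_continuous_onI[OF clip_cont] by (auto simp: M_def)
  have "g measurable_on S"
    using g S(1) by (simp add: measurable_on_iff_borel_measurable)
  then obtain N c where N: "negligible N" and c: "\<And>n. continuous_on UNIV (c n)"
     and conv: "\<And>x. x \<notin> N \<Longrightarrow> (\<lambda>n. c n x) \<longlonglongrightarrow> (if x \<in> S then g x else 0)"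
    unfolding measurable_on_def by blast
  have [measurable]: "c n \<in> borel_measurable M" for n
    unfolding M_def using continuous_imp_measurable_on_sets_lebesgue[OF _ S(1)] c
    by (meson continuous_on_subset subset_UNIV)
  have AEN: "AE x in M. x \<notin> N"
    by (rule AE_I'[where N="N \<inter> S"])
       (use N S(1) in \<open>auto simp: M_def null_sets_restrict_space negligible_iff_null_sets null_set_Int2\<close>)
  have "(\<lambda>n. \<integral>\<^sup>+ p. ennreal ((clip m (c n p) - clip m (g p))\<^sup>2) \<partial>M) \<longlonglongrightarrow> (\<integral>\<^sup>+ p. ennreal 0 \<partial>M)"
  proof (rule nn_integral_dominated_convergence[where w="\<lambda>p. ennreal (4 * m\<^sup>2)"])
    show "\<And>j. AE x in M. ennreal ((clip m (c j x) - clip m (g x))\<^sup>2) \<le> ennreal (4 * m\<^sup>2)"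
      using clip_diff_bound[OF m] by (auto intro!: ennreal_leI)
    show "(\<integral>\<^sup>+ x. ennreal (4 * m\<^sup>2) \<partial>M) < \<infinity>"
      using S by (simp add: M_def ennreal_mult_less_top emeasure_restrict_space)
    show "AE x in M. (\<lambda>i. ennreal ((clip m (c i x) - clip m (g x))\<^sup>2)) \<longlonglongrightarrow> ennreal 0"
      using AEN AE_space
    proof eventually_elim
      case (elim x)
      have "x \<in> S" using elim(2) by (simp add: M_def)
      then have "(\<lambda>n. c n x) \<longlonglongrightarrow> g x" using conv[OF elim(1)] by simp
      then have "(\<lambda>n. clip m (c n x)) \<longlonglongrightarrow> clip m (g x)"
        using continuous_on_tendsto_compose[OF clip_cont] by auto
      then show ?case
        by (intro tendsto_ennrealI) (auto intro!: tendsto_eq_intros)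
    qed
  qed measurable
  then have lim: "(\<lambda>n. \<integral>\<^sup>+ p. ennreal ((clip m (c n p) - clip m (g p))\<^sup>2) \<partial>M) \<longlonglongrightarrow> 0"
    by simp
  obtain n where "(\<integral>\<^sup>+ p. ennreal ((clip m (c n p) - clip m (g p))\<^sup>2) \<partial>M) < ennreal e"
    using ennreal_tendsto_zero_below[OF lim e] by blast
  then show ?thesis using c unfolding M_def by blast
qed

lemma L2_continuous_approx:
  fixes g :: "'a::euclidean_space \<Rightarrow> real"
  assumes S: "S \<in> sets lebesgue" "emeasure lebesgue S < \<infinity>"
    and g: "g \<in> borel_measurable (lebesgue_on S)"
    and gi: "(\<integral>\<^sup>+ p. ennreal ((g p)\<^sup>2) \<partial>lebesgue_on S) < \<infinity>" and e: "e > 0"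
  shows "\<exists>G. continuous_on UNIV G \<and> (\<integral>\<^sup>+ p. ennreal ((G p - g p)\<^sup>2) \<partial>lebesgue_on S) < ennreal e"
proof -
  define M where "M = lebesgue_on S"
  have [measurable]: "g \<in> borel_measurable M" "clip m \<in> borel_measurable borel" for m
    using g borel_measurable_continuous_onI[OF clip_cont] by (auto simp: M_def)
  obtain m :: nat where m: "(\<integral>\<^sup>+ p. ennreal ((clip (real m) (g p) - g p)\<^sup>2) \<partial>M) < ennreal (e/4)"
    using L2_truncation[of g M "e/4"] g gi e by (auto simp: M_def)
  obtain c where c: "continuous_on UNIV c"
    and cm: "(\<integral>\<^sup>+ p. ennreal ((clip (real m) (c p) - clip (real m) (g p))\<^sup>2) \<partial>M) < ennreal (e/4)"
    using L2_clip_continuous_approx[OF S g, of "real m" "e/4"] e by (auto simp: M_def)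
  have [measurable]: "c \<in> borel_measurable M"
    unfolding M_def using continuous_imp_measurable_on_sets_lebesgue[OF _ S(1)] c
    by (meson continuous_on_subset subset_UNIV)
  define G where "G = (\<lambda>x. clip (real m) (c x))"
  have "(\<integral>\<^sup>+ p. ennreal ((G p - g p)\<^sup>2) \<partial>M)
      \<le> (\<integral>\<^sup>+ p. 2 * ennreal ((clip (real m) (c p) - clip (real m) (g p))\<^sup>2)
                + 2 * ennreal ((clip (real m) (g p) - g p)\<^sup>2) \<partial>M)"
  proof (rule nn_integral_mono)
    fix p
    show "ennreal ((G p - g p)\<^sup>2) \<le> 2 * ennreal ((clip (real m) (c p) - clip (real m) (g p))\<^sup>2)
                                    + 2 * ennreal ((clip (real m) (g p) - g p)\<^sup>2)"
      using ennreal_square_add_le[of "clip (real m) (c p) - clip (real m) (g p)" "clip (real m) (g p) - g p"]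
      by (simp add: G_def)
  qed
  also have "\<dots> = 2 * (\<integral>\<^sup>+ p. ennreal ((clip (real m) (c p) - clip (real m) (g p))\<^sup>2) \<partial>M)
                + 2 * (\<integral>\<^sup>+ p. ennreal ((clip (real m) (g p) - g p)\<^sup>2) \<partial>M)"
    by (subst nn_integral_add) (auto simp: nn_integral_cmult)
  also have "\<dots> < ennreal (2 * (e/4) + 2 * (e/4))"
    using cm m by (rule ennreal_double_sum_less)
  also have "\<dots> = ennreal e"
    by simp
  finally show ?thesis
    using continuous_on_compose2[OF clip_cont c] unfolding G_def M_def by blast
qed

lemma omega_lebesgue: "omega L \<in> sets lebesgue"
  unfolding omega_def by (intro lmeasurable_open fmeasurableD bounded_Times open_Times) auto

lemma omega_finite_measure: "emeasure lebesgue (omega L) < \<infinity>"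
proof -
  have "omega L \<in> lmeasurable"
    unfolding omega_def by (intro lmeasurable_open bounded_Times open_Times) auto
  then show ?thesis unfolding fmeasurable_def by blast
qed

lemma at_right_zero_selection:
  fixes f :: "'a \<Rightarrow> ennreal"
  assumes "\<And>\<epsilon>. \<epsilon> > 0 \<Longrightarrow> \<exists>x. P x \<and> f x < ennreal \<epsilon>"
  shows "\<exists>V :: real \<Rightarrow> 'a. (\<forall>\<epsilon>>0. P (V \<epsilon>)) \<and> ((\<lambda>\<epsilon>. f (V \<epsilon>)) \<longlongrightarrow> 0) (at_right 0)"
proof -
  define V where "V = (\<lambda>\<epsilon>::real. SOME x. P x \<and> f x < ennreal \<epsilon>)"
  have V: "P (V \<epsilon>) \<and> f (V \<epsilon>) < ennreal \<epsilon>" if "\<epsilon> > 0" for \<epsilon>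
    unfolding V_def by (rule someI_ex[OF assms[OF that]])
  have lim: "((\<lambda>\<epsilon>. ennreal \<epsilon>) \<longlongrightarrow> 0) (at_right 0)"
    using tendsto_ennrealI[OF tendsto_ident_at[of 0 "{0<..}"]] by simp
  have bound: "\<forall>\<^sub>F \<epsilon> in at_right 0. f (V \<epsilon>) \<le> ennreal \<epsilon>"
  proof (rule eventually_at_rightI[of 0 1])
    fix \<epsilon> :: real assume "\<epsilon> \<in> {0<..<1}"
    then show "f (V \<epsilon>) \<le> ennreal \<epsilon>" using V[of \<epsilon>] by (simp add: less_imp_le)
  qed simp
  have "((\<lambda>\<epsilon>. f (V \<epsilon>)) \<longlongrightarrow> 0) (at_right 0)"
    by (rule tendsto_sandwich[OF _ bound tendsto_const lim]) simp
  then show ?thesis using V by (intro exI[of _ V]) auto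
qed

context curved_cylinder
begin

text \<open>Every L^2 function is an L^2 limit of attainable strains: approximate it by a
  continuous G, and G uniformly by an attainable H.\<close>
lemma admissible_L2_approx:
  assumes g: "g \<in> L2 L" and e: "e > 0"
  shows "\<exists>v. admissible v \<and>
    (\<integral>\<^sup>+ p. ennreal ((pd1 L (\<lambda>q. v q $ 1) p - g p)\<^sup>2) \<partial>lebesgue_on (omega L)) < ennreal e"
proof -
  define M where "M = lebesgue_on (omega L)"
  have [measurable]: "g \<in> borel_measurable M" and gi: "(\<integral>\<^sup>+ p. ennreal ((g p)\<^sup>2) \<partial>M) < \<infinity>"
    using g by (auto simp: L2_def M_def)
  obtain G where Gc: "continuous_on UNIV G"
    and Gi: "(\<integral>\<^sup>+ p. ennreal ((G p - g p)\<^sup>2) \<partial>M) < ennreal (e/4)"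
    using L2_continuous_approx[OF omega_lebesgue[of L] omega_finite_measure[of L], of g "e/4"] g e
    by (auto simp: L2_def M_def)
  have [measurable]: "G \<in> borel_measurable M"
    unfolding M_def using continuous_imp_measurable_on_sets_lebesgue[OF _ omega_lebesgue] Gc
    by (meson continuous_on_subset subset_UNIV)
  define R where "R = enn2real (emeasure M (space M))"
  have R: "emeasure M (space M) = ennreal R" "R \<ge> 0"
    using omega_finite_measure[of L] omega_lebesgue
    by (simp_all add: R_def M_def emeasure_restrict_space ennreal_enn2real_if less_top)
  define \<eta> where "\<eta> = sqrt (e / (4 * (R + 1)))"
  have \<eta>: "\<eta> > 0" "\<eta>\<^sup>2 * R < e / 4"
    using e R(2) by (simp_all add: \<eta>_def field_simps)
  obtain H where H: "attainable H" "\<forall>p\<in>omega L. \<bar>G p - H p\<bar> < \<eta>"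
    using continuous_unif_attainable[OF continuous_on_subset[OF Gc subset_UNIV] \<eta>(1)] by blast
  obtain v where v: "admissible v" "\<forall>p\<in>omega L. pd1 L (\<lambda>q. v q $ 1) p = H p"
    using H(1) unfolding attainable_def by blast
  have "(\<integral>\<^sup>+ p. ennreal ((pd1 L (\<lambda>q. v q $ 1) p - g p)\<^sup>2) \<partial>M)
      \<le> (\<integral>\<^sup>+ p. 2 * ennreal (\<eta>\<^sup>2) + 2 * ennreal ((G p - g p)\<^sup>2) \<partial>M)"
  proof (rule nn_integral_mono)
    fix p assume "p \<in> space M"
    then have p: "p \<in> omega L" by (simp add: M_def)
    have "\<bar>H p - G p\<bar> \<le> \<eta>"
      using H(2) p by (simp add: abs_minus_commute less_imp_le)
    then have "(H p - G p)\<^sup>2 \<le> \<eta>\<^sup>2"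
      by (metis abs_ge_zero power2_abs power_mono)
    have "ennreal ((pd1 L (\<lambda>q. v q $ 1) p - g p)\<^sup>2) = ennreal ((H p - G p + (G p - g p))\<^sup>2)"
      using v(2) p by simp
    also have "\<dots> \<le> 2 * ennreal ((H p - G p)\<^sup>2) + 2 * ennreal ((G p - g p)\<^sup>2)"
      by (rule ennreal_square_add_le)
    also have "\<dots> \<le> 2 * ennreal (\<eta>\<^sup>2) + 2 * ennreal ((G p - g p)\<^sup>2)"
      using \<open>(H p - G p)\<^sup>2 \<le> \<eta>\<^sup>2\<close> by (intro add_right_mono mult_left_mono ennreal_leI) auto
    finally show "ennreal ((pd1 L (\<lambda>q. v q $ 1) p - g p)\<^sup>2) \<le> 2 * ennreal (\<eta>\<^sup>2) + 2 * ennreal ((G p - g p)\<^sup>2)" .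
  qed
  also have "\<dots> = 2 * ennreal (\<eta>\<^sup>2 * R) + 2 * (\<integral>\<^sup>+ p. ennreal ((G p - g p)\<^sup>2) \<partial>M)"
    using R by (subst nn_integral_add) (auto simp: nn_integral_cmult ennreal_mult mult.assoc)
  also have "\<dots> < ennreal (2 * (e/4) + 2 * (e/4))"
    using \<eta>(2) Gi R(2) by (intro ennreal_double_sum_less) (auto simp: ennreal_less_iff)
  also have "\<dots> = ennreal e"
    by simp
  finally show ?thesis using v(1) unfolding M_def by blast
qed

end

theorem mainTheorem6:
  fixes L :: real and \<gamma> :: "real \<Rightarrow> real^3"
  assumes "L > 0"
    and planar: "\<forall>s\<in>{0..1}. \<gamma> s $ 1 = 0"
    and smooth: "Ck_interval 6 \<gamma>"
    and simple: "inj_on \<gamma> {0..1}"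
    and arclength: "\<forall>s\<in>{0..1}. norm (tang \<gamma> s) = 1"
    and finite_zeros: "finite {s\<in>{0..1}. curv \<gamma> s = 0}"
  shows "calG L \<gamma> = L2 L"
proof -
  interpret curved_cylinder \<gamma> L
    by unfold_locales (use assms in auto)
  show ?thesis
  proof (intro equalityI subsetI)
    fix g assume "g \<in> calG L \<gamma>"
    then show "g \<in> L2 L" unfolding calG_def by blast
  next
    fix g assume g: "g \<in> L2 L"
    obtain V where "\<forall>\<epsilon>::real>0. admissible (V \<epsilon>)"
      and "((\<lambda>\<epsilon>. \<integral>\<^sup>+ p. ennreal ((pd1 L (\<lambda>q. V \<epsilon> q $ 1) p - g p)\<^sup>2) \<partial>lebesgue_on (omega L)) \<longlongrightarrow> 0)
             (at_right 0)"
      using at_right_zero_selection[OF admissible_L2_approx[OF g]] by blast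
    then show "g \<in> calG L \<gamma>" using g unfolding calG_def admissible_def by blast
  qed
qed

end
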